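(* For a nonzero integer $k$ let $$P_k(t)=k-3kt+5kt^2-7kt^3+(8k+1)t^4-7kt^5+5kt^6-3kt^7+kt^8,$$ the Alexander polynomial of the 2-bridge knot $K([2,2,2,2k,-2,-2,-2,-2])$. Then: (1) if $k\in\{1,2\}$, no zero of $P_k$ is real or of modulus $1$; (2) if $k\in\{3,4,5,6\}$, $P_k$ has exactly four zeros of modulus $1$ (all non-real) and four non-real zeros not of modulus $1$; (3) if $k\ge7$, all eight zeros of $P_k$ have modulus $1$; (4) if $k<0$, $P_k$ has exactly two real zeros and six non-real zeros of modulus $1$. In particular $P_k$ has no real zero when $k>0$. *)

theory Defs
  imports Complex_Main "HOL-Computational_Algebra.Polynomial"
begin

definition alex_poly :: "int \<Rightarrow> complex poly" where
  "alex_poly k = map_poly of_int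
     [:k, -3*k, 5*k, -7*k, 8*k+1, -7*k, 5*k, -3*k, k:]"

definition root_count :: "complex poly \<Rightarrow> complex set \<Rightarrow> nat" where
  "root_count p S = (\<Sum>z\<in>{z\<in>S. poly p z = 0}. order z p)"

end

theory Submission
  imports Defs "HOL-Computational_Algebra.Fundamental_Theorem_Algebra"
begin

text \<open>\<open>P\<^sub>k\<close> is palindromic: \<open>P\<^sub>k(z) = z\<^sup>4 Q\<^sub>k(z + 1/z)\<close> with the quartic
  \<open>Q\<^sub>k(x) = k x (x - 2)(x\<^sup>2 - x - 1) + 1\<close>. Hence the zeros of \<open>P\<^sub>k\<close> are the solutions of
  \<open>z\<^sup>2 - x z + 1 = 0\<close> for the zeros \<open>x\<close> of \<open>Q\<^sub>k\<close>: a real \<open>x\<close> with \<open>|x| < 2\<close> gives a conjugate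
  pair on the unit circle, a real \<open>x\<close> with \<open>|x| > 2\<close> a pair of real zeros. Sign changes of
  \<open>Q\<^sub>k\<close> locate its real zeros; for \<open>k \<ge> 7\<close> and \<open>k < 0\<close> they already exhaust its degree, for
  \<open>k \<le> 6\<close> elementary estimates bound their number in \<open>[-2, 2]\<close>. Counting with multiplicity
  reduces to counting sets because all zeros of \<open>P\<^sub>k\<close> are simple: a double zero would be a
  common zero of \<open>Q\<^sub>k\<close> and \<open>Q\<^sub>k'\<close>, but their resultant \<open>20k\<^sup>3 - 152k\<^sup>2 + 133k + 256\<close> is
  never divisible by 3.\<close>

definition alex_core :: "'a::comm_ring_1 \<Rightarrow> 'a" where
  "alex_core x = x * (x - 2) * (x^2 - x - 1)"

definition alex_quartic :: "int \<Rightarrow> 'a::comm_ring_1 \<Rightarrow> 'a" where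
  "alex_quartic k x = of_int k * alex_core x + 1"

lemma alex_quartic_of_real:
  "alex_quartic k (of_real x) = (of_real (alex_quartic k x) :: 'a::{real_algebra_1, comm_ring_1})"
  by (simp add: alex_quartic_def alex_core_def)

lemma alex_poly_pCons:
  "alex_poly k = [:of_int k, of_int (-3*k), of_int (5*k), of_int (-7*k), of_int (8*k+1),
                   of_int (-7*k), of_int (5*k), of_int (-3*k), of_int k:]"
  by (simp add: alex_poly_def map_poly_pCons)

lemma alex_poly_nonzero: "k \<noteq> 0 \<Longrightarrow> alex_poly k \<noteq> 0"
  by (simp add: alex_poly_pCons)

lemma degree_alex_poly: "k \<noteq> 0 \<Longrightarrow> degree (alex_poly k) = 8"
  by (simp add: alex_poly_pCons)

lemma poly_alex_poly:
  "poly (alex_poly k) z = of_int k * (z^2 + 1) * (z - 1)^2 * (z^4 - z^3 + z^2 - z + 1) + z^4"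
  by (simp add: alex_poly_pCons algebra_simps power2_eq_square power3_eq_cube power4_eq_xxxx
      numeral_eq_Suc)

lemma poly_alex_poly_0: "poly (alex_poly k) 0 = of_int k"
  by (simp add: poly_alex_poly)

lemma poly_alex_poly_eq_quartic:
  assumes "z \<noteq> 0"
  shows "poly (alex_poly k) z = z^4 * alex_quartic k (z + 1/z)"
proof -
  define x where "x = z + 1/z"
  have zx: "z * x = z^2 + 1"
    using assms by (simp add: x_def field_simps power2_eq_square)
  have "z^4 * alex_quartic k x
      = of_int k * (z*x) * (z*x - 2*z) * ((z*x)^2 - z*(z*x) - z^2) + z^4"
    unfolding alex_quartic_def alex_core_def by algebra
  also have "\<dots> = poly (alex_poly k) z"
    unfolding zx poly_alex_poly by algebra
  finally show ?thesis by (simp add: x_def)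
qed

lemma poly_pderiv_alex_poly:
  "poly (pderiv (alex_poly k)) z = 8 * of_int k * z^7 - 21 * of_int k * z^6 + 30 * of_int k * z^5
     - 35 * of_int k * z^4 + 4 * (8 * of_int k + 1) * z^3 - 21 * of_int k * z^2
     + 10 * of_int k * z - 3 * of_int k"
  unfolding alex_poly_pCons by (simp add: pderiv_pCons algebra_simps numeral_eq_Suc)

lemma poly_pderiv_alex_poly_eq_quartic:
  assumes "z \<noteq> 0"
  defines "x \<equiv> z + 1/z"
  shows "poly (pderiv (alex_poly k)) z
       = 4 * z^3 * alex_quartic k x + z^2 * (z^2 - 1) * of_int k * (4*x^3 - 9*x^2 + 2*x + 2)"
proof -
  have zx: "z * x = z^2 + 1"
    using \<open>z \<noteq> 0\<close> by (simp add: x_def field_simps power2_eq_square)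
  have "4 * z^3 * alex_quartic k x + z^2 * (z^2 - 1) * of_int k * (4*x^3 - 9*x^2 + 2*x + 2)
      = 4 * of_int k * (z*x) * (z*x - 2*z) * ((z*x)^2 - z*(z*x) - z^2) / z + 4*z^3
        + (z^2 - 1) * of_int k * (4*(z*x)^3 - 9*z*(z*x)^2 + 2*z^2*(z*x) + 2*z^3) / z"
    using \<open>z \<noteq> 0\<close> by (simp add: alex_quartic_def alex_core_def field_simps) algebra
  also have "\<dots> = poly (pderiv (alex_poly k)) z"
    unfolding zx poly_pderiv_alex_poly using \<open>z \<noteq> 0\<close> by (simp add: field_simps) algebra
  finally show ?thesis ..
qed

text \<open>The cubic is \<open>Q\<^sub>k'/k\<close>. The quadratics \<open>r0, r1, r2\<close> are \<open>16 Q\<^sub>k\<close>, \<open>4x r0\<close> and \<open>4x r1\<close>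
  reduced modulo the cubic; eliminating \<open>1, x, x\<^sup>2\<close> among them leaves the resultant.\<close>

lemma common_root_imp_alex_resultant_eq_0:
  fixes x :: "'a::{idom, ring_char_0}"
  assumes q: "alex_quartic k x = 0" and d: "4*x^3 - 9*x^2 + 2*x + 2 = 0"
  shows "20*k^3 - 152*k^2 + 133*k + 256 = 0"
proof -
  define K :: 'a where "K = of_int k"
  define r0 where "r0 = 16 + 6*K + 30*K*x - 19*K*x^2"
  define r1 where "r1 = 38*K + (64 + 62*K)*x - 51*K*x^2"
  define r2 where "r2 = 102*K + 254*K*x + (256 - 211*K)*x^2"
  have "16 * alex_quartic k x = (4*K*x - 3*K) * (4*x^3 - 9*x^2 + 2*x + 2) + r0"
    unfolding r0_def K_def alex_quartic_def alex_core_def by algebra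
  hence h0: "r0 = 0" using q d by simp
  have "4*x*r0 = -19*K*(4*x^3 - 9*x^2 + 2*x + 2) + r1"
    unfolding r0_def r1_def by algebra
  hence h1: "r1 = 0" using h0 d by simp
  have "4*x*r1 = -51*K*(4*x^3 - 9*x^2 + 2*x + 2) + r2"
    unfolding r1_def r2_def by algebra
  hence h2: "r2 = 0" using h1 d by simp
  have "(16384 + 2368*K - 128*K^2)*r0 + (-7680*K + 1504*K^2)*r1 + (1216*K - 352*K^2)*r2
      = 1024 * of_int (20*k^3 - 152*k^2 + 133*k + 256)"
    unfolding r0_def r1_def r2_def K_def by simp algebra
  hence "1024 * (of_int (20*k^3 - 152*k^2 + 133*k + 256) :: 'a) = 0"
    using h0 h1 h2 by simp
  thus ?thesis by (metis mult_eq_0_iff of_int_eq_0_iff zero_neq_numeral)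
qed

lemma alex_resultant_nonzero: "20*k^3 - 152*k^2 + 133*k + 256 \<noteq> (0::int)"
proof
  assume e: "20*k^3 - 152*k^2 + 133*k + 256 = 0"
  define q r where "q = k div 3" and "r = k mod 3"
  have k: "k = 3*q + r" by (simp add: q_def r_def)
  have "20*k^3 - 152*k^2 + 133*k + 256
      = 3*(180*q^3 + 180*q^2*r + 60*q*r^2 - 456*q^2 - 304*q*r + 133*q
           + 6*r^3 - 51*r^2 + 44*r + 85) + (2*r^3 + r^2 + r + 1)"
    unfolding k by (simp add: algebra_simps power2_eq_square power3_eq_cube)
  hence "3 dvd 2*r^3 + r^2 + r + 1"
    using e by (metis dvd_triv_left add_diff_cancel_left' dvd_minus_iff diff_0)
  moreover have "r = 0 \<or> r = 1 \<or> r = 2" unfolding r_def by auto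
  ultimately show False by auto
qed

lemma rsquarefree_alex_poly:
  assumes k: "k \<noteq> 0"
  shows "rsquarefree (alex_poly k)"
  unfolding rsquarefree_roots
proof (intro allI notI, elim conjE)
  fix z assume root: "poly (alex_poly k) z = 0" and droot: "poly (pderiv (alex_poly k)) z = 0"
  have "z \<noteq> 0" using root k poly_alex_poly_0 by auto
  define x where "x = z + 1/z"
  have q: "alex_quartic k x = 0"
    using root poly_alex_poly_eq_quartic[OF \<open>z \<noteq> 0\<close>, of k, folded x_def] \<open>z \<noteq> 0\<close> by simp
  have "z^2 \<noteq> 1"
  proof
    assume "z^2 = 1"
    hence "z = 1 \<or> z = -1" by (simp add: power2_eq_1_iff)
    moreover have "poly (alex_poly k) 1 = 1" by (simp add: poly_alex_poly)
    moreover have "poly (alex_poly k) (-1) = of_int (40 * k + 1)" by (simp add: poly_alex_poly)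
    moreover have "(of_int (40 * k + 1) :: complex) \<noteq> 0" by (simp only: of_int_eq_0_iff) presburger
    ultimately show False using root by auto
  qed
  have "4*x^3 - 9*x^2 + 2*x + 2 \<noteq> 0"
    using common_root_imp_alex_resultant_eq_0[OF q] alex_resultant_nonzero by blast
  moreover have "poly (pderiv (alex_poly k)) z = z^2 * (z^2 - 1) * of_int k * (4*x^3 - 9*x^2 + 2*x + 2)"
    using poly_pderiv_alex_poly_eq_quartic[OF \<open>z \<noteq> 0\<close>, of k, folded x_def] q by simp
  ultimately show False using droot \<open>z \<noteq> 0\<close> \<open>z^2 \<noteq> 1\<close> k by simp
qed

lemma root_count_rsquarefree:
  assumes "rsquarefree p"
  shows "root_count p S = card {z\<in>S. poly p z = 0}"
  using rsquarefree_root_order[OF assms] assms by (simp add: root_count_def rsquarefree_def)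

lemma root_count_UNIV:
  assumes "p \<noteq> 0"
  shows "root_count p UNIV = degree p"
  using size_proots_complex[of p] assms by (simp add: root_count_def size_multiset_overloaded_eq)

lemma root_count_Compl:
  assumes "p \<noteq> 0"
  shows "root_count p (- S) = degree p - root_count p S"
proof -
  have "finite {z. poly p z = 0}" using poly_roots_finite[OF assms] .
  hence "root_count p UNIV = root_count p S + root_count p (- S)"
    unfolding root_count_def
    by (subst sum.union_disjoint[symmetric]) (auto intro: finite_subset intro!: sum.cong)
  thus ?thesis using root_count_UNIV[OF assms] by simp
qed

lemma add_inverse_eq_iff:
  fixes z w :: "'a::field"
  assumes "z \<noteq> 0"
  shows "z + 1/z = w \<longleftrightarrow> z^2 - w*z + 1 = 0"
  using assms by (auto simp: field_simps power2_eq_square)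

lemma alex_poly_root_iff:
  assumes "k \<noteq> 0"
  shows "poly (alex_poly k) z = 0 \<longleftrightarrow> (\<exists>x. alex_quartic k x = 0 \<and> z^2 - x*z + 1 = 0)"
proof
  assume root: "poly (alex_poly k) z = 0"
  hence "z \<noteq> 0" using assms poly_alex_poly_0 by auto
  have "alex_quartic k (z + 1/z) = 0"
    using root poly_alex_poly_eq_quartic[OF \<open>z \<noteq> 0\<close>] \<open>z \<noteq> 0\<close> by simp
  moreover have "z^2 - (z + 1/z) * z + 1 = 0"
    using add_inverse_eq_iff[OF \<open>z \<noteq> 0\<close>] by blast
  ultimately show "\<exists>x. alex_quartic k x = 0 \<and> z^2 - x*z + 1 = 0" by blast
next
  assume "\<exists>x. alex_quartic k x = 0 \<and> z^2 - x*z + 1 = 0"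
  then obtain x where q: "alex_quartic k x = 0" and quad: "z^2 - x*z + 1 = 0" by blast
  have "z \<noteq> 0" using quad by auto
  hence "z + 1/z = x" using quad add_inverse_eq_iff by blast
  thus "poly (alex_poly k) z = 0"
    using poly_alex_poly_eq_quartic[OF \<open>z \<noteq> 0\<close>] q by simp
qed

lemma unit_circle_add_inverse:
  assumes "cmod z = 1"
  shows "z + 1/z = of_real (2 * Re z)"
proof -
  have "z * cnj z = 1" using assms complex_norm_square[of z] by simp
  moreover have "z \<noteq> 0" using assms by auto
  ultimately have "1/z = cnj z" by (simp add: field_simps)
  thus ?thesis by (simp add: complex_add_cnj)
qed

lemma alex_poly_unit_circle_root_iff:
  assumes "k \<noteq> 0" and "cmod z = 1"
  shows "poly (alex_poly k) z = 0 \<longleftrightarrow> alex_quartic k (2 * Re z) = 0"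
proof -
  have "z \<noteq> 0" using assms(2) by auto
  have "poly (alex_poly k) z = z^4 * of_real (alex_quartic k (2 * Re z))"
    using poly_alex_poly_eq_quartic[OF \<open>z \<noteq> 0\<close>] unit_circle_add_inverse[OF assms(2)]
    by (simp only: alex_quartic_of_real)
  thus ?thesis using \<open>z \<noteq> 0\<close> by simp
qed

lemma quadratic_roots_abs_less_2:
  fixes x :: real
  assumes "\<bar>x\<bar> < 2"
  obtains a where "{z. z^2 - of_real x * z + 1 = 0} = {a, cnj a}"
    and "cmod a = 1" and "a \<notin> \<real>" and "Re a = x/2"
proof
  define s where "s = sqrt (4 - x^2)"
  have "x^2 < 4" using power_strict_mono[of "\<bar>x\<bar>" 2 2] assms by simp
  hence s2: "s^2 = 4 - x^2" and "s > 0" by (auto simp: s_def)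
  define a where "a = Complex (x/2) (s/2)"
  have "a + cnj a = of_real x" and "a * cnj a = 1"
    using s2 by (simp_all add: a_def complex_eq_iff power2_eq_square field_simps)
  moreover have "(z - a) * (z - cnj a) = z^2 - (a + cnj a) * z + a * cnj a" for z
    by algebra
  ultimately have "\<And>z. z^2 - of_real x * z + 1 = (z - a) * (z - cnj a)" by simp
  thus "{z. z^2 - of_real x * z + 1 = 0} = {a, cnj a}" by auto
  show "cmod a = 1" using s2 by (simp add: a_def cmod_def power_divide add_divide_distrib[symmetric])
  show "a \<notin> \<real>" using \<open>s > 0\<close> by (simp add: a_def complex_is_Real_iff)
  show "Re a = x/2" by (simp add: a_def)
qed

lemma quadratic_roots_abs_greater_2:
  fixes x :: real
  assumes "\<bar>x\<bar> > 2"
  obtains a b :: real where "{z::complex. z^2 - of_real x * z + 1 = 0} = {of_real a, of_real b}"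
    and "a \<noteq> b"
proof
  define s where "s = sqrt (x^2 - 4)"
  have "x^2 > 4" using power_strict_mono[of 2 "\<bar>x\<bar>" 2] assms by simp
  hence s2: "s^2 = x^2 - 4" and "s > 0" by (auto simp: s_def)
  define a b where "a = (x + s)/2" and "b = (x - s)/2"
  have "a + b = x" and "a * b = 1"
    using s2 by (simp_all add: a_def b_def field_simps power2_eq_square)
  have "(z - of_real a) * (z - of_real b) = z^2 - of_real (a + b) * z + of_real (a * b)"
    for z :: complex by (simp add: algebra_simps power2_eq_square)
  hence "\<And>z::complex. z^2 - of_real x * z + 1 = (z - of_real a) * (z - of_real b)"
    using \<open>a + b = x\<close> \<open>a * b = 1\<close> by simp
  thus "{z::complex. z^2 - of_real x * z + 1 = 0} = {of_real a, of_real b}" by auto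
  show "a \<noteq> b" using \<open>s > 0\<close> by (simp add: a_def b_def)
qed

lemma alex_quartic_complex_roots:
  assumes "k \<noteq> 0" and "card X = 4" and "\<forall>x\<in>X. alex_quartic k x = 0"
  shows "{w::complex. alex_quartic k w = 0} = of_real ` X"
proof -
  define q :: "complex poly" where "q = [:1, 2 * of_int k, of_int k, -3 * of_int k, of_int k:]"
  have poly_q: "poly q w = alex_quartic k w" for w
    by (simp add: q_def alex_quartic_def alex_core_def algebra_simps power2_eq_square
        power3_eq_cube power4_eq_xxxx)
  have "q \<noteq> 0" and "degree q = 4" using assms(1) by (simp_all add: q_def)
  hence "finite {w::complex. alex_quartic k w = 0}" and "card {w::complex. alex_quartic k w = 0} \<le> 4"
    using poly_roots_finite[of q] card_poly_roots_bound[of q] by (simp_all add: poly_q)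
  moreover have "of_real ` X \<subseteq> {w::complex. alex_quartic k w = 0}"
    using assms(3) by (auto simp: alex_quartic_of_real)
  moreover have "card (of_real ` X :: complex set) = 4"
    using assms(2) by (simp add: card_image inj_on_def)
  ultimately have "of_real ` X = {w::complex. alex_quartic k w = 0}"
    by (intro card_seteq) simp_all
  thus ?thesis ..
qed

lemma alex_poly_roots:
  assumes "k \<noteq> 0" and "card X = 4" and "\<forall>x\<in>X. alex_quartic k x = 0"
  shows "{z. poly (alex_poly k) z = 0} = (\<Union>x\<in>X. {z. z^2 - of_real x * z + 1 = 0})"
proof -
  have "alex_quartic k w = 0 \<longleftrightarrow> w \<in> of_real ` X" for w :: complex
    using alex_quartic_complex_roots[OF assms] by blast
  thus ?thesis unfolding alex_poly_root_iff[OF assms(1)] by auto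
qed

lemma alex_quartic_IVT:
  fixes a b :: real
  assumes "a < b" and "alex_quartic k a * alex_quartic k b < 0"
  obtains x where "a < x" and "x < b" and "alex_quartic k x = 0"
proof -
  have "\<forall>x. a \<le> x \<and> x \<le> b \<longrightarrow> isCont (alex_quartic k :: real \<Rightarrow> real) x"
    unfolding alex_quartic_def alex_core_def by (intro allI impI continuous_intros)
  moreover have "alex_quartic k a < 0 \<and> 0 < alex_quartic k b \<or> 0 < alex_quartic k a \<and> alex_quartic k b < 0"
    using assms(2) by (auto simp: mult_less_0_iff)
  ultimately obtain x where "a \<le> x" "x \<le> b" "alex_quartic k x = 0"
    using IVT[of "alex_quartic k" a 0 b] IVT2[of "alex_quartic k" b 0 a] assms(1)
    by (metis less_imp_le)
  moreover have "x \<noteq> a" "x \<noteq> b" using calculation assms(2) by auto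
  ultimately show ?thesis by (auto intro!: that[of x])
qed

lemma alex_core_nonneg:
  fixes x :: real
  assumes "x \<le> -31/50 \<or> 0 \<le> x \<and> x \<le> 3/2 \<or> 2 \<le> x"
  shows "0 \<le> alex_core x"
  using assms
proof (elim disjE conjE)
  assume x: "x \<le> -31/50"
  have "x^2 - x - 1 = (x + 31/50) * (x - 81/50) + 11/2500"
    by (simp add: algebra_simps power2_eq_square)
  moreover have "0 \<le> (x + 31/50) * (x - 81/50)" using x by (intro mult_nonpos_nonpos) auto
  moreover have "0 \<le> x * (x - 2)" using x by (intro mult_nonpos_nonpos) auto
  ultimately show ?thesis unfolding alex_core_def by simp
next
  assume x: "0 \<le> x" "x \<le> 3/2"
  have "x * x \<le> x * (3/2)" using x by (intro mult_left_mono) auto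
  hence "x^2 - x - 1 \<le> 0" using x by (simp add: power2_eq_square)
  moreover have "x * (x - 2) \<le> 0" using x by (intro mult_nonneg_nonpos) auto
  ultimately show ?thesis unfolding alex_core_def by (simp add: mult_nonpos_nonpos)
next
  assume x: "2 \<le> x"
  have "2 * x \<le> x * x" using x by (intro mult_right_mono) auto
  hence "0 \<le> x^2 - x - 1" using x unfolding power2_eq_square by linarith
  thus ?thesis unfolding alex_core_def using x by simp
qed

lemma alex_core_lower_bound: "0 < 2 * alex_core x + (1::real)"
proof -
  have "2 * alex_core x + 1 = 2 * (x*x - 3/2*x - 13/20)^2 + 1/10 * (x + 1/2)^2 + 13/100"
    unfolding alex_core_def by (simp add: algebra_simps power2_eq_square)
  thus ?thesis by (simp add: add_nonneg_pos)
qed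

lemma alex_core_lower_bound_near_2:
  fixes x :: real
  assumes "3/2 \<le> x" and "x \<le> 2"
  shows "0 < 6 * alex_core x + 1"
proof -
  define u where "u = 2 - x"
  have "0 \<le> u * (1/2 - u)" using assms by (simp add: u_def)
  moreover have "6 * alex_core x + 1 = 2/5 * (u * (1/2 - u))
      + (6 * (u*u - 5/2*u + 81/200)^2 + 1/25 * (u - 5/8)^2 + 9/40000)"
    unfolding alex_core_def u_def by (simp add: field_simps power2_eq_square)
  ultimately show ?thesis by (simp add: add_nonneg_pos)
qed

lemma alex_quartic_pos_if_le:
  fixes x :: real
  assumes "0 \<le> k" and "real_of_int k \<le> c" and "0 < c * alex_core x + 1"
  shows "0 < alex_quartic k x"
proof (cases "0 \<le> alex_core x")
  case True
  thus ?thesis using assms(1) by (simp add: alex_quartic_def add_nonneg_pos)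
next
  case False
  hence "c * alex_core x \<le> real_of_int k * alex_core x"
    using assms(2) by (intro mult_right_mono_neg) auto
  thus ?thesis using assms(3) by (simp add: alex_quartic_def)
qed

text \<open>Three such zeros would make the second divided difference of \<open>alex_core\<close> vanish.\<close>

lemma alex_quartic_no_three_nonpos_roots:
  fixes a b c :: real
  assumes "k \<noteq> 0" and "a \<noteq> b" "a \<noteq> c" "b \<noteq> c" and "a \<le> 0" "b \<le> 0" "c \<le> 0"
    and "alex_quartic k a = 0" "alex_quartic k b = 0" "alex_quartic k c = 0"
  shows False
proof -
  define D where "D u v = u^3 + u^2*v + u*v^2 + v^3 - 3*(u^2 + u*v + v^2) + (u + v) + 2" for u v :: real
  have diff: "alex_quartic k u - alex_quartic k v = (u - v) * real_of_int k * D u v" for u v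
    unfolding alex_quartic_def alex_core_def D_def
    by (simp add: algebra_simps power2_eq_square power3_eq_cube)
  have "D a b = 0" "D a c = 0" using diff[of a b] diff[of a c] assms by auto
  moreover have "D a b - D a c = (b - c) * (a^2 + b^2 + c^2 + a*b + b*c + c*a - 3*(a + b + c) + 1)"
    unfolding D_def by (simp add: algebra_simps power2_eq_square power3_eq_cube)
  moreover have "0 < a^2 + b^2 + c^2 + a*b + b*c + c*a - 3*(a + b + c) + 1"
    using assms(5-7) mult_nonpos_nonpos[OF assms(5,6)] mult_nonpos_nonpos[OF assms(6,7)]
      mult_nonpos_nonpos[OF assms(7,5)] zero_le_power2[of a] zero_le_power2[of b] zero_le_power2[of c]
    by (smt (verit))
  ultimately show False using assms(4) by simp
qed

lemma quadratic_root_abs_less_2: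
  fixes x :: real
  assumes "\<bar>x\<bar> < 2" and "z^2 - of_real x * z + 1 = 0"
  shows "cmod z = 1" and "z \<notin> \<real>"
proof -
  obtain a where roots: "{z. z^2 - of_real x * z + 1 = 0} = {a, cnj a}"
    and "cmod a = 1" and "a \<notin> \<real>"
    using quadratic_roots_abs_less_2[OF assms(1)] by blast
  have "z = a \<or> z = cnj a" using assms(2) roots by blast
  thus "cmod z = 1" "z \<notin> \<real>"
    using \<open>cmod a = 1\<close> \<open>a \<notin> \<real>\<close> by (auto simp: complex_is_Real_iff)
qed

lemma alex_poly_root_of_quartic_root:
  fixes x :: real
  assumes "k \<noteq> 0" and "alex_quartic k x = 0" and "z^2 - of_real x * z + 1 = 0"
  shows "poly (alex_poly k) z = 0"
proof -
  have "alex_quartic k (of_real x :: complex) = 0" using assms(2) by (simp add: alex_quartic_of_real)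
  thus ?thesis using alex_poly_root_iff[OF assms(1)] assms(3) by blast
qed

lemma alex_quartic_pos_1_2:
  fixes x :: real
  assumes "k \<in> {1, 2}"
  shows "0 < alex_quartic k x"
  using assms alex_quartic_pos_if_le[of k 2 x] alex_core_lower_bound[of x] by auto

lemma alex_quartic_roots_3_6:
  assumes "k \<in> {3..6}"
  obtains x1 x2 :: real where "x1 \<noteq> x2" and "\<bar>x1\<bar> < 2" and "\<bar>x2\<bar> < 2"
    and "alex_quartic k x1 = 0" and "alex_quartic k x2 = 0"
    and "\<forall>x. \<bar>x\<bar> \<le> 2 \<longrightarrow> alex_quartic k x = 0 \<longrightarrow> x = x1 \<or> x = x2"
proof -
  have k: "3 \<le> real_of_int k" "real_of_int k \<le> 6" using assms by auto
  have v: "0 < alex_quartic k (-31/50 :: real)" "alex_quartic k (-2/5 :: real) < 0"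
    "0 < alex_quartic k (0 :: real)"
    using k by (simp_all add: alex_quartic_def alex_core_def power2_eq_square)
  obtain x1 :: real where x1: "-31/50 < x1" "x1 < -2/5" "alex_quartic k x1 = 0"
    by (rule alex_quartic_IVT[OF _ mult_pos_neg[OF v(1,2)]]) auto
  obtain x2 :: real where x2: "-2/5 < x2" "x2 < 0" "alex_quartic k x2 = 0"
    by (rule alex_quartic_IVT[OF _ mult_neg_pos[OF v(2,3)]]) auto
  have only: "x = x1 \<or> x = x2" if x: "\<bar>x\<bar> \<le> 2" "alex_quartic k x = 0" for x
  proof (rule ccontr)
    assume new: "\<not> (x = x1 \<or> x = x2)"
    consider "x \<le> -31/50 \<or> 0 \<le> x \<and> x \<le> 3/2" | "-31/50 < x \<and> x < 0" | "3/2 \<le> x" by linarith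
    thus False
    proof cases
      case 1
      hence "0 \<le> alex_core x" using alex_core_nonneg by blast
      hence "0 < alex_quartic k x" using k by (simp add: alex_quartic_def add_nonneg_pos)
      thus False using x(2) by simp
    next
      case 2
      thus False
        using alex_quartic_no_three_nonpos_roots[of k x x1 x2] new x1 x2 x(2) k by auto
    next
      case 3
      thus False
        using alex_quartic_pos_if_le[of k 6 x] alex_core_lower_bound_near_2[of x] k x by auto
    qed
  qed
  have "x1 \<noteq> x2" "\<bar>x1\<bar> < 2" "\<bar>x2\<bar> < 2" using x1 x2 by auto
  thus ?thesis using that x1(3) x2(3) only by blast
qed

lemma alex_quartic_roots_ge_7:
  assumes "7 \<le> k"
  obtains X :: "real set" where "card X = 4" and "\<forall>x\<in>X. alex_quartic k x = 0 \<and> \<bar>x\<bar> < 2"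
proof -
  have k: "7 \<le> real_of_int k" using assms by simp
  have v: "0 < alex_quartic k (-2 :: real)" "alex_quartic k (-1/2 :: real) < 0"
    "0 < alex_quartic k (0 :: real)" "alex_quartic k (9/5 :: real) < 0" "0 < alex_quartic k (2 :: real)"
    using k by (simp_all add: alex_quartic_def alex_core_def power2_eq_square)
  obtain x1 :: real where x1: "-2 < x1" "x1 < -1/2" "alex_quartic k x1 = 0"
    by (rule alex_quartic_IVT[OF _ mult_pos_neg[OF v(1,2)]]) auto
  obtain x2 :: real where x2: "-1/2 < x2" "x2 < 0" "alex_quartic k x2 = 0"
    by (rule alex_quartic_IVT[OF _ mult_neg_pos[OF v(2,3)]]) auto
  obtain x3 :: real where x3: "0 < x3" "x3 < 9/5" "alex_quartic k x3 = 0"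
    by (rule alex_quartic_IVT[OF _ mult_pos_neg[OF v(3,4)]]) auto
  obtain x4 :: real where x4: "9/5 < x4" "x4 < 2" "alex_quartic k x4 = 0"
    by (rule alex_quartic_IVT[OF _ mult_neg_pos[OF v(4,5)]]) auto
  have "card {x1, x2, x3, x4} = 4"
    using distinct_card[of "[x1, x2, x3, x4]"] x1 x2 x3 x4 by auto
  moreover have "\<forall>x\<in>{x1, x2, x3, x4}. alex_quartic k x = 0 \<and> \<bar>x\<bar> < 2"
    using x1 x2 x3 x4 by auto
  ultimately show ?thesis by (rule that)
qed

lemma alex_quartic_roots_neg:
  assumes "k < 0"
  obtains x :: real and X :: "real set" where "2 < x" and "alex_quartic k x = 0"
    and "card X = 3" and "\<forall>y\<in>X. alex_quartic k y = 0 \<and> \<bar>y\<bar> < 2"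
proof -
  have k: "real_of_int k \<le> -1" using assms by simp
  have v: "alex_quartic k (-1 :: real) < 0" "0 < alex_quartic k (-1/2 :: real)"
    "0 < alex_quartic k (0 :: real)" "alex_quartic k (4/5 :: real) < 0"
    "0 < alex_quartic k (17/10 :: real)" "0 < alex_quartic k (2 :: real)"
    "alex_quartic k (3 :: real) < 0"
    using k by (simp_all add: alex_quartic_def alex_core_def power2_eq_square)
  obtain x1 :: real where x1: "-1 < x1" "x1 < -1/2" "alex_quartic k x1 = 0"
    by (rule alex_quartic_IVT[OF _ mult_neg_pos[OF v(1,2)]]) auto
  obtain x2 :: real where x2: "0 < x2" "x2 < 4/5" "alex_quartic k x2 = 0"
    by (rule alex_quartic_IVT[OF _ mult_pos_neg[OF v(3,4)]]) auto
  obtain x3 :: real where x3: "4/5 < x3" "x3 < 17/10" "alex_quartic k x3 = 0"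
    by (rule alex_quartic_IVT[OF _ mult_neg_pos[OF v(4,5)]]) auto
  obtain x4 :: real where x4: "2 < x4" "x4 < 3" "alex_quartic k x4 = 0"
    by (rule alex_quartic_IVT[OF _ mult_pos_neg[OF v(6,7)]]) auto
  have card: "card {x1, x2, x3} = 3"
    using distinct_card[of "[x1, x2, x3]"] x1 x2 x3 by auto
  have "\<forall>y\<in>{x1, x2, x3}. alex_quartic k y = 0 \<and> \<bar>y\<bar> < 2"
    using x1 x2 x3 by auto
  from that[OF x4(1) x4(3) card this] show ?thesis .
qed

lemma alex_poly_no_real_roots:
  assumes "0 < k" and "z \<in> \<real>"
  shows "poly (alex_poly k) z \<noteq> 0"
proof -
  obtain t where z: "z = of_real t" using assms(2) by (auto elim: Reals_cases)
  define p where "p = real_of_int k * (t^2 + 1) * (t - 1)^2 * (t^4 - t^3 + t^2 - t + 1) + t^4"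
  have "t^4 - t^3 + t^2 - t + 1 = (t^2 - t/2)^2 + 3/4 * (t - 2/3)^2 + 2/3"
    by (simp add: algebra_simps power2_eq_square power3_eq_cube power4_eq_xxxx)
  hence "0 < t^4 - t^3 + t^2 - t + 1" by (simp add: add_nonneg_pos)
  hence nonneg: "0 \<le> real_of_int k * (t^2 + 1) * (t - 1)^2 * (t^4 - t^3 + t^2 - t + 1)"
    using assms(1) by simp
  have "0 < p"
  proof (cases "t = 0")
    case True
    thus ?thesis using assms(1) by (simp add: p_def)
  next
    case False
    hence "0 < t^4" by simp
    thus ?thesis using nonneg unfolding p_def by linarith
  qed
  moreover have "poly (alex_poly k) z = of_real p"
    unfolding z p_def by (simp add: poly_alex_poly)
  ultimately show ?thesis by simp
qed

lemma alex_poly_no_unit_circle_roots_1_2: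
  assumes "k \<in> {1, 2}" and "poly (alex_poly k) z = 0"
  shows "cmod z \<noteq> 1"
proof
  assume "cmod z = 1"
  have "k \<noteq> 0" using assms(1) by auto
  hence "alex_quartic k (2 * Re z) = 0"
    using alex_poly_unit_circle_root_iff[OF _ \<open>cmod z = 1\<close>] assms(2) by blast
  thus False using alex_quartic_pos_1_2[OF assms(1), of "2 * Re z"] by simp
qed

lemma root_count_unit_circle_3_6:
  assumes "k \<in> {3..6}"
  shows "root_count (alex_poly k) {z. cmod z = 1} = 4"
proof -
  have "k \<noteq> 0" using assms by auto
  obtain x1 x2 :: real where "x1 \<noteq> x2" and bound: "\<bar>x1\<bar> < 2" "\<bar>x2\<bar> < 2"
    and roots: "alex_quartic k x1 = 0" "alex_quartic k x2 = 0"
    and only: "\<forall>x. \<bar>x\<bar> \<le> 2 \<longrightarrow> alex_quartic k x = 0 \<longrightarrow> x = x1 \<or> x = x2"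
    by (rule alex_quartic_roots_3_6[OF assms])
  obtain a1 where a1: "{z. z^2 - of_real x1 * z + 1 = 0} = {a1, cnj a1}"
    "cmod a1 = 1" "a1 \<notin> \<real>" "Re a1 = x1/2"
    by (rule quadratic_roots_abs_less_2[OF bound(1)])
  obtain a2 where a2: "{z. z^2 - of_real x2 * z + 1 = 0} = {a2, cnj a2}"
    "cmod a2 = 1" "a2 \<notin> \<real>" "Re a2 = x2/2"
    by (rule quadratic_roots_abs_less_2[OF bound(2)])
  have "{z \<in> {z. cmod z = 1}. poly (alex_poly k) z = 0} = {a1, cnj a1, a2, cnj a2}"
  proof (intro equalityI subsetI)
    fix z assume "z \<in> {z \<in> {z. cmod z = 1}. poly (alex_poly k) z = 0}"
    hence unit: "cmod z = 1" and root: "poly (alex_poly k) z = 0" by auto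
    have "alex_quartic k (2 * Re z) = 0"
      using root alex_poly_unit_circle_root_iff[OF \<open>k \<noteq> 0\<close> unit] by blast
    moreover have "\<bar>2 * Re z\<bar> \<le> 2" using abs_Re_le_cmod[of z] unit by simp
    ultimately have "2 * Re z = x1 \<or> 2 * Re z = x2" using only by blast
    moreover have "z \<noteq> 0" using unit by auto
    hence "z^2 - of_real (2 * Re z) * z + 1 = 0"
      using add_inverse_eq_iff[OF \<open>z \<noteq> 0\<close>] unit_circle_add_inverse[OF unit] by blast
    ultimately show "z \<in> {a1, cnj a1, a2, cnj a2}" using a1(1) a2(1) by auto
  next
    fix z assume "z \<in> {a1, cnj a1, a2, cnj a2}"
    hence "cmod z = 1 \<and> (z^2 - of_real x1 * z + 1 = 0 \<or> z^2 - of_real x2 * z + 1 = 0)"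
      using a1(1,2) a2(1,2) by auto
    thus "z \<in> {z \<in> {z. cmod z = 1}. poly (alex_poly k) z = 0}"
      using alex_poly_root_of_quartic_root[OF \<open>k \<noteq> 0\<close>] roots by auto
  qed
  moreover have "card {a1, cnj a1, a2, cnj a2} = 4"
  proof -
    have "a1 \<noteq> cnj a1" "a2 \<noteq> cnj a2" using a1(3) a2(3) Reals_cnj_iff by metis+
    moreover have "Re a1 \<noteq> Re a2" using a1(4) a2(4) \<open>x1 \<noteq> x2\<close> by simp
    hence "a1 \<noteq> a2" "a1 \<noteq> cnj a2" "cnj a1 \<noteq> a2" "cnj a1 \<noteq> cnj a2" by auto
    ultimately show ?thesis by simp
  qed
  ultimately show ?thesis
    using root_count_rsquarefree[OF rsquarefree_alex_poly[OF \<open>k \<noteq> 0\<close>]] by simp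
qed

lemma alex_poly_roots_unit_circle_ge_7:
  assumes "7 \<le> k" and "poly (alex_poly k) z = 0"
  shows "cmod z = 1"
proof -
  have "k \<noteq> 0" using assms(1) by simp
  obtain X :: "real set" where X: "card X = 4" "\<forall>x\<in>X. alex_quartic k x = 0 \<and> \<bar>x\<bar> < 2"
    by (rule alex_quartic_roots_ge_7[OF assms(1)])
  hence "\<forall>x\<in>X. alex_quartic k x = 0" by blast
  hence "z \<in> (\<Union>x\<in>X. {z. z^2 - of_real x * z + 1 = 0})"
    using alex_poly_roots[OF \<open>k \<noteq> 0\<close> X(1)] assms(2) by blast
  then obtain x where "x \<in> X" and "z^2 - of_real x * z + 1 = 0" by blast
  thus ?thesis using quadratic_root_abs_less_2(1) X(2) by blast
qed

lemma alex_poly_roots_neg: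
  assumes "k < 0"
  shows "root_count (alex_poly k) \<real> = 2"
    and "poly (alex_poly k) z = 0 \<Longrightarrow> z \<notin> \<real> \<Longrightarrow> cmod z = 1"
proof -
  have "k \<noteq> 0" using assms by simp
  obtain x :: real and X :: "real set" where x: "2 < x" "alex_quartic k x = 0"
    and X: "card X = 3" "\<forall>y\<in>X. alex_quartic k y = 0 \<and> \<bar>y\<bar> < 2"
    by (rule alex_quartic_roots_neg[OF assms])
  have "x \<notin> X" using x(1) X(2) by auto
  moreover have "finite X" using X(1) by (simp add: card_ge_0_finite)
  ultimately have "card (insert x X) = 4" using X(1) by simp
  moreover have "\<forall>y\<in>insert x X. alex_quartic k y = 0" using x(2) X(2) by blast
  ultimately have roots: "{z. poly (alex_poly k) z = 0}
      = {z. z^2 - of_real x * z + 1 = 0} \<union> (\<Union>y\<in>X. {z. z^2 - of_real y * z + 1 = 0})"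
    using alex_poly_roots[OF \<open>k \<noteq> 0\<close>] by simp
  have inside: "cmod z = 1 \<and> z \<notin> \<real>" if z: "z \<in> (\<Union>y\<in>X. {z. z^2 - of_real y * z + 1 = 0})" for z
  proof -
    obtain y where "y \<in> X" and "z^2 - of_real y * z + 1 = 0" using z by blast
    thus ?thesis using quadratic_root_abs_less_2 X(2) by blast
  qed
  have "\<bar>x\<bar> > 2" using x(1) by simp
  then obtain a b :: real
    where ab: "{z::complex. z^2 - of_real x * z + 1 = 0} = {of_real a, of_real b}" "a \<noteq> b"
    by (rule quadratic_roots_abs_greater_2)
  have "{z \<in> \<real>. poly (alex_poly k) z = 0} = {of_real a, of_real b}"
    using roots inside ab(1) by auto
  thus "root_count (alex_poly k) \<real> = 2"
    using root_count_rsquarefree[OF rsquarefree_alex_poly[OF \<open>k \<noteq> 0\<close>]] ab(2) by simp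
  show "cmod z = 1" if "poly (alex_poly k) z = 0" and "z \<notin> \<real>"
  proof -
    have "z \<in> {of_real a, of_real b} \<union> (\<Union>y\<in>X. {z. z^2 - of_real y * z + 1 = 0})"
      using that(1) roots ab(1) by blast
    moreover have "z \<notin> {of_real a, of_real b}" using that(2) by auto
    ultimately show ?thesis using inside by blast
  qed
qed

theorem theoremC1:
  fixes k :: int
  assumes "k \<noteq> 0"
  shows "(k \<in> {1, 2} \<longrightarrow>
            (\<forall>z. poly (alex_poly k) z = 0 \<longrightarrow> z \<notin> \<real> \<and> cmod z \<noteq> 1))
       \<and> (k \<in> {3..6} \<longrightarrow>
            root_count (alex_poly k) {z. cmod z = 1} = 4
          \<and> (\<forall>z. poly (alex_poly k) z = 0 \<and> cmod z = 1 \<longrightarrow> z \<notin> \<real>)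
          \<and> root_count (alex_poly k) {z. z \<notin> \<real> \<and> cmod z \<noteq> 1} = 4)
       \<and> (k \<ge> 7 \<longrightarrow> (\<forall>z. poly (alex_poly k) z = 0 \<longrightarrow> cmod z = 1))
       \<and> (k < 0 \<longrightarrow>
            root_count (alex_poly k) \<real> = 2
          \<and> root_count (alex_poly k) {z. z \<notin> \<real> \<and> cmod z = 1} = 6)
       \<and> (k > 0 \<longrightarrow> (\<forall>z\<in>\<real>. poly (alex_poly k) z \<noteq> 0))"
proof (intro conjI impI)
  have compl: "root_count (alex_poly k) (- S) = 8 - root_count (alex_poly k) S" for S
    using root_count_Compl[OF alex_poly_nonzero[OF assms]] degree_alex_poly[OF assms] by simp
  show "\<forall>z. poly (alex_poly k) z = 0 \<longrightarrow> z \<notin> \<real> \<and> cmod z \<noteq> 1" if "k \<in> {1, 2}"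
    using that alex_poly_no_unit_circle_roots_1_2 alex_poly_no_real_roots[of k] by auto
  show "root_count (alex_poly k) {z. cmod z = 1} = 4" if "k \<in> {3..6}"
    using root_count_unit_circle_3_6[OF that] .
  show "\<forall>z. poly (alex_poly k) z = 0 \<and> cmod z = 1 \<longrightarrow> z \<notin> \<real>" if "k \<in> {3..6}"
    using that alex_poly_no_real_roots[of k] by auto
  show "root_count (alex_poly k) {z. z \<notin> \<real> \<and> cmod z \<noteq> 1} = 4" if "k \<in> {3..6}"
  proof -
    have "root_count (alex_poly k) {z. z \<notin> \<real> \<and> cmod z \<noteq> 1}
        = root_count (alex_poly k) (- {z. cmod z = 1})"
      unfolding root_count_def using that alex_poly_no_real_roots[of k] by (intro sum.cong) auto
    thus ?thesis using compl root_count_unit_circle_3_6[OF that] by simp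
  qed
  show "\<forall>z. poly (alex_poly k) z = 0 \<longrightarrow> cmod z = 1" if "k \<ge> 7"
    using alex_poly_roots_unit_circle_ge_7[OF that] by blast
  show "root_count (alex_poly k) \<real> = 2" if "k < 0"
    using alex_poly_roots_neg(1)[OF that] .
  show "root_count (alex_poly k) {z. z \<notin> \<real> \<and> cmod z = 1} = 6" if "k < 0"
  proof -
    have "root_count (alex_poly k) {z. z \<notin> \<real> \<and> cmod z = 1} = root_count (alex_poly k) (- \<real>)"
      unfolding root_count_def using alex_poly_roots_neg(2)[OF that] by (intro sum.cong) auto
    thus ?thesis using compl alex_poly_roots_neg(1)[OF that] by simp
  qed
  show "\<forall>z\<in>\<real>. poly (alex_poly k) z \<noteq> 0" if "k > 0"
    using alex_poly_no_real_roots[OF that] by blast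
qed

end
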